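(* If a language $L \subseteq \mathbb{N}$ is computably succinct, then any functional property $\psi$ that $L$ captures is in $\Pi^0_2$.
   Context: Programs (generators) are identified with natural numbers in a fixed universal programming language; $\varphi_g$ is the partial computable function computed by $g$, and $|g|$ denotes the length of program $g$ (e.g. number of bits of its representation). $L$ being computably succinct means that there is a computable function $f$ such that for every program $g \in \mathbb{N}$ for which some functionally equivalent program exists in $L$, there is $g' \in L$ with $\varphi_{g'} = \varphi_g$ and $|g'| \le f(|g|)$ (in the argument this is used in the form $g' \le f(g)$, a bound on the index). A property $\psi \subseteq \mathbb{N}$ is functional if whenever $\varphi_g = \varphi_{g'}$, $\psi(g) \leftrightarrow \psi(g')$. $L$ captures $\psi$ if $L$ is decidable, every $g \in L$ satisfies $\psi$, and for every $g' \in \mathbb{N}$ satisfying $\psi$ there is $g \in L$ with $\varphi_g = \varphi_{g'}$. *)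

theory Defs
  imports Main "HOL-Library.Nat_Bijection"
begin

text \<open>Input is placed in register 0, all other registers
are 0, execution starts at instruction 0 and halts when the program counter leaves
the program; the output is the content of register 0.\<close>

datatype instr = INC nat | DEC nat nat

definition decode_instr :: "nat \<Rightarrow> instr" where
  "decode_instr n = (if even n then INC (n div 2)
                     else (case prod_decode (n div 2) of (r, j) \<Rightarrow> DEC r j))"

definition decode_prog :: "nat \<Rightarrow> instr list" where
  "decode_prog g = map decode_instr (list_decode g)"

type_synonym config = "nat \<times> (nat \<Rightarrow> nat)"

definition step :: "instr list \<Rightarrow> config \<Rightarrow> config" where
  "step p c = (case c of (pc, R) \<Rightarrow>
     if pc < length p then
       (case p ! pc of
          INC r \<Rightarrow> (Suc pc, R(r := Suc (R r)))
        | DEC r j \<Rightarrow> (if R r = 0 then (j, R) else (Suc pc, R(r := R r - 1))))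
     else (pc, R))"

definition run :: "nat \<Rightarrow> nat \<Rightarrow> nat \<Rightarrow> config" where
  "run g x n = (step (decode_prog g) ^^ n) (0, (\<lambda>_. 0)(0 := x))"

definition halted :: "nat \<Rightarrow> config \<Rightarrow> bool" where
  "halted g c \<longleftrightarrow> length (decode_prog g) \<le> fst c"

definition phi :: "nat \<Rightarrow> nat \<Rightarrow> nat option" where
  "phi g x = (if \<exists>n. halted g (run g x n)
              then Some (snd (run g x (LEAST n. halted g (run g x n))) 0)
              else None)"

fun plen :: "nat \<Rightarrow> nat" where
  "plen n = (if n < 2 then 1 else Suc (plen (n div 2)))"

definition computable :: "(nat \<Rightarrow> nat) \<Rightarrow> bool" where
  "computable f \<longleftrightarrow> (\<exists>g. \<forall>x. phi g x = Some (f x))"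

definition decidable :: "nat set \<Rightarrow> bool" where
  "decidable A \<longleftrightarrow> computable (\<lambda>x. if x \<in> A then 1 else 0)"

definition Pi02 :: "nat set \<Rightarrow> bool" where
  "Pi02 A \<longleftrightarrow> (\<exists>R. decidable R \<and>
     (\<forall>x. x \<in> A \<longleftrightarrow> (\<forall>y. \<exists>z. prod_encode (x, prod_encode (y, z)) \<in> R)))"

definition computably_succinct :: "nat set \<Rightarrow> bool" where
  "computably_succinct L \<longleftrightarrow> (\<exists>f. computable f \<and>
     (\<forall>g. (\<exists>g'\<in>L. phi g' = phi g) \<longrightarrow>
          (\<exists>g'\<in>L. phi g' = phi g \<and> plen g' \<le> f (plen g))))"

definition functional_prop :: "nat set \<Rightarrow> bool" where
  "functional_prop \<psi> \<longleftrightarrow> (\<forall>g g'. phi g = phi g' \<longrightarrow> (g \<in> \<psi> \<longleftrightarrow> g' \<in> \<psi>))"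

definition captures :: "nat set \<Rightarrow> nat set \<Rightarrow> bool" where
  "captures L \<psi> \<longleftrightarrow> decidable L \<and> (\<forall>g\<in>L. g \<in> \<psi>) \<and>
     (\<forall>g'. g' \<in> \<psi> \<longrightarrow> (\<exists>g\<in>L. phi g = phi g'))"

end

theory Submission
  imports Defs
begin

text \<open>By succinctness with computable bound \<open>F\<close>, a program \<open>x\<close> has the functional property
  \<open>\<psi>\<close> iff some \<open>g < 2 ^ F (plen x)\<close> in \<open>L\<close> computes the same function as \<open>x\<close>. Equality of the
  computed functions is \<open>\<Pi>\<^sup>0\<^sub>2\<close>: for every input \<open>w\<close> and time \<open>t\<close>, if one program halts on \<open>w\<close>
  within \<open>t\<close> steps then the other halts within some \<open>s\<close> steps with the same output. This
  condition is monotone in \<open>s\<close>, so the bounded search over \<open>g\<close> can be moved inside the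
  \<open>\<forall>\<exists>\<close> prefix. The remaining matrix is decidable because a counter machine can be simulated
  step by step on coded configurations. Such simulations are written as structured while
  programs, compiled to counter machines, and assembled using closure of the while-computable
  functions under pairing, tail recursion and bounded quantification.\<close>

section \<open>While programs and their compilation to counter machines\<close>

datatype cmd = Inc nat | Dec nat | Seq cmd cmd | While nat cmd

inductive exec :: "cmd \<Rightarrow> (nat \<Rightarrow> nat) \<Rightarrow> (nat \<Rightarrow> nat) \<Rightarrow> bool" where
  exec_Inc: "exec (Inc r) R (R(r := Suc (R r)))"
| exec_Dec: "exec (Dec r) R (R(r := R r - 1))"
| exec_Seq: "exec c1 R R1 \<Longrightarrow> exec c2 R1 R2 \<Longrightarrow> exec (Seq c1 c2) R R2"
| exec_While_exit: "R r = 0 \<Longrightarrow> exec (While r c) R R"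
| exec_While_iter: "R r \<noteq> 0 \<Longrightarrow> exec c R R1 \<Longrightarrow> exec (While r c) R1 R2 \<Longrightarrow> exec (While r c) R R2"

lemma exec_eq_target: "exec c R R1 \<Longrightarrow> R1 = R2 \<Longrightarrow> exec c R R2"
  by simp

fun regs :: "cmd \<Rightarrow> nat set" where
  "regs (Inc r) = {r}"
| "regs (Dec r) = {r}"
| "regs (Seq c1 c2) = regs c1 \<union> regs c2"
| "regs (While r c) = insert r (regs c)"

lemma finite_regs: "finite (regs c)"
  by (induction c) auto

lemma fresh_reg: "Suc (Max (regs c)) \<notin> regs c"
  using Max_ge[OF finite_regs] by fastforce

lemma exec_frame: "exec c R R' \<Longrightarrow> r \<notin> regs c \<Longrightarrow> R' r = R r"
  by (induction rule: exec.induct) auto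

fun shift_instr :: "nat \<Rightarrow> instr \<Rightarrow> instr" where
  "shift_instr k (INC r) = INC r"
| "shift_instr k (DEC r j) = DEC r (j + k)"

definition shift :: "nat \<Rightarrow> instr list \<Rightarrow> instr list" where
  "shift k p = map (shift_instr k) p"

lemma shift_0 [simp]: "shift 0 p = p"
proof -
  have "shift_instr 0 i = i" for i
    by (cases i) auto
  then show ?thesis
    by (simp add: shift_def map_idI)
qed

lemma length_shift [simp]: "length (shift k p) = length p"
  by (simp add: shift_def)

text \<open>The register \<open>z\<close> must stay 0: the final \<open>DEC z 0\<close> of a loop is then an unconditional
  jump back to the loop test, and the \<open>INC r\<close> right after the test undoes its decrement when
  \<open>r\<close> is nonzero. \<open>DEC r 1\<close> continues with the next instruction in either case.\<close>

fun compile :: "nat \<Rightarrow> cmd \<Rightarrow> instr list" where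
  "compile z (Inc r) = [INC r]"
| "compile z (Dec r) = [DEC r 1]"
| "compile z (Seq c1 c2) = compile z c1 @ shift (length (compile z c1)) (compile z c2)"
| "compile z (While r c) =
     [DEC r (length (compile z c) + 3), INC r] @ shift 2 (compile z c) @ [DEC z 0]"

definition reaches :: "instr list \<Rightarrow> config \<Rightarrow> config \<Rightarrow> bool" where
  "reaches p c c' \<longleftrightarrow> (\<exists>n. (step p ^^ n) c = c')"

lemma reaches_refl: "reaches p c c"
  unfolding reaches_def by (metis funpow_0)

lemma reaches_step: "step p c = c' \<Longrightarrow> reaches p c' c'' \<Longrightarrow> reaches p c c''"
  unfolding reaches_def by (metis funpow_Suc_right o_apply)

lemma reaches_one: "step p c = c' \<Longrightarrow> reaches p c c'"
  unfolding reaches_def by (rule exI[of _ 1]) simp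

lemma reaches_trans: "reaches p c1 c2 \<Longrightarrow> reaches p c2 c3 \<Longrightarrow> reaches p c1 c3"
  unfolding reaches_def by (metis funpow_add o_apply)

lemma step_beyond: "length p \<le> pc \<Longrightarrow> step p (pc, R) = (pc, R)"
  by (simp add: step_def)

lemma steps_beyond: "length p \<le> fst c \<Longrightarrow> (step p ^^ k) c = c"
  by (induction k) (auto simp: step_beyond[of p "fst c" "snd c", simplified])

lemma step_shifted:
  assumes "pc < length p"
  shows "step (a @ shift (length a) p @ b) (length a + pc, R) =
         (case step p (pc, R) of (pc', R') \<Rightarrow> (length a + pc', R'))"
proof -
  have "(shift (length a) p @ b) ! pc = shift_instr (length a) (p ! pc)"
    using assms by (simp add: nth_append shift_def)
  then show ?thesis
    using assms unfolding step_def by (cases "p ! pc") auto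
qed

lemma reaches_shifted:
  "(step p ^^ n) (pc, R) = (length p, R') \<Longrightarrow>
   reaches (a @ shift (length a) p @ b) (length a + pc, R) (length a + length p, R')"
proof (induction n arbitrary: pc R)
  case 0
  then show ?case by (simp add: reaches_refl)
next
  case (Suc n)
  show ?case
  proof (cases "pc < length p")
    case True
    obtain pc' R1 where s: "step p (pc, R) = (pc', R1)"
      by fastforce
    then have "(step p ^^ n) (pc', R1) = (length p, R')"
      using Suc.prems by (simp add: funpow_Suc_right del: funpow.simps)
    then show ?thesis
      using Suc.IH step_shifted[OF True, of a b R] s by (auto intro: reaches_step)
  next
    case False
    then show ?thesis
      using Suc.prems steps_beyond[of p "(pc, R)" "Suc n"] by (simp add: reaches_refl)
  qed
qed

lemma reaches_shifted_program:
  "reaches p (0, R) (length p, R') \<Longrightarrow> length a = k \<Longrightarrow>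
   reaches (a @ shift k p @ b) (k, R) (k + length p, R')"
  unfolding reaches_def using reaches_shifted[where pc = 0] by (auto simp: reaches_def)

lemma compile_correct:
  "exec c R R' \<Longrightarrow> R z = 0 \<Longrightarrow> z \<notin> regs c \<Longrightarrow>
   reaches (compile z c) (0, R) (length (compile z c), R')"
proof (induction rule: exec.induct)
  case (exec_Inc r R)
  show ?case by (rule reaches_one) (auto simp: step_def fun_eq_iff)
next
  case (exec_Dec r R)
  show ?case by (rule reaches_one) (auto simp: step_def fun_eq_iff)
next
  case (exec_Seq c1 R R1 c2 R2)
  let ?p1 = "compile z c1" and ?p2 = "compile z c2"
  have "R1 z = 0"
    using exec_Seq exec_frame by fastforce
  then have "reaches ?p2 (0, R1) (length ?p2, R2)"
    using exec_Seq.IH(2) exec_Seq.prems(2) by simp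
  then have second: "reaches (compile z (Seq c1 c2)) (length ?p1, R1) (length (compile z (Seq c1 c2)), R2)"
    using reaches_shifted_program[of ?p2 R1 R2 ?p1 "length ?p1" "[]"] by simp
  have "reaches ?p1 (0, R) (length ?p1, R1)"
    using exec_Seq.IH(1) exec_Seq.prems by simp
  then have first: "reaches (compile z (Seq c1 c2)) (0, R) (length ?p1, R1)"
    using reaches_shifted_program[of ?p1 R R1 "[]" 0 "shift (length ?p1) ?p2"] by simp
  show ?case
    using reaches_trans[OF first second] .
next
  case (exec_While_exit R r c)
  then show ?case by (intro reaches_one) (simp add: step_def)
next
  case (exec_While_iter R r c R1 R2)
  let ?p = "compile z (While r c)"
  let ?L = "length (compile z c)"
  have enter: "reaches ?p (0, R) (2, R)"
    by (rule reaches_step[OF _ reaches_one]) (use exec_While_iter(1) in \<open>auto simp: step_def\<close>)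
  have "reaches (compile z c) (0, R) (?L, R1)"
    using exec_While_iter.IH(1) exec_While_iter.prems by simp
  then have body: "reaches ?p (2, R) (2 + ?L, R1)"
    using reaches_shifted_program[of "compile z c" R R1 "[DEC r (?L + 3), INC r]" 2 "[DEC z 0]"]
    by simp
  have "R1 z = 0"
    using exec_While_iter exec_frame by fastforce
  then have jump: "step ?p (2 + ?L, R1) = (0, R1)"
    by (simp add: step_def nth_append)
  have again: "reaches ?p (0, R1) (length ?p, R2)"
    using exec_While_iter.IH(2) exec_While_iter.prems(2) \<open>R1 z = 0\<close> by blast
  show ?case
    using reaches_trans[OF enter reaches_trans[OF body reaches_step[OF jump again]]] .
qed

lemma run_add: "run g x (n + k) = (step (decode_prog g) ^^ k) (run g x n)"
  unfolding run_def by (simp add: funpow_add add.commute[of n])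

lemma run_halted_stable: "halted g (run g x n) \<Longrightarrow> n \<le> m \<Longrightarrow> run g x m = run g x n"
  using run_add[of g x n "m - n"] steps_beyond[of "decode_prog g" "run g x n" "m - n"]
  by (simp add: halted_def)

lemma phi_eq_Some_iff: "phi g w = Some v \<longleftrightarrow> (\<exists>t. halted g (run g w t) \<and> snd (run g w t) 0 = v)"
proof
  assume v: "phi g w = Some v"
  then have ex: "\<exists>n. halted g (run g w n)"
    unfolding phi_def by (auto split: if_splits)
  then have "halted g (run g w (LEAST n. halted g (run g w n)))"
    by (rule LeastI_ex)
  moreover have "snd (run g w (LEAST n. halted g (run g w n))) 0 = v"
    using v ex unfolding phi_def by simp
  ultimately show "\<exists>t. halted g (run g w t) \<and> snd (run g w t) 0 = v"
    by blast
next
  assume "\<exists>t. halted g (run g w t) \<and> snd (run g w t) 0 = v"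
  then obtain t where t: "halted g (run g w t)" "snd (run g w t) 0 = v"
    by blast
  let ?m = "LEAST n. halted g (run g w n)"
  have "halted g (run g w ?m)" "?m \<le> t"
    using t(1) by (auto intro: LeastI Least_le)
  then have "run g w t = run g w ?m"
    by (rule run_halted_stable)
  then show "phi g w = Some v"
    using t unfolding phi_def by auto
qed

lemma phi_eq_Some_if_reaches:
  assumes "decode_prog g = p" and "reaches p (0, (\<lambda>_. 0)(0 := x)) (length p, R')"
  shows "phi g x = Some (R' 0)"
proof -
  obtain n where "run g x n = (length p, R')"
    using assms unfolding reaches_def run_def by auto
  then have "halted g (run g x n) \<and> snd (run g x n) 0 = R' 0"
    using assms(1) by (simp add: halted_def)
  then show ?thesis
    unfolding phi_eq_Some_iff ..
qed

fun encode_instr :: "instr \<Rightarrow> nat" where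
  "encode_instr (INC r) = 2 * r"
| "encode_instr (DEC r j) = 2 * prod_encode (r, j) + 1"

lemma decode_prog_encode: "decode_prog (list_encode (map encode_instr p)) = p"
proof -
  have "decode_instr (encode_instr i) = i" for i
    by (cases i) (auto simp: decode_instr_def)
  then show ?thesis
    by (simp add: decode_prog_def map_idI)
qed

definition computes :: "cmd \<Rightarrow> (nat \<Rightarrow> nat) \<Rightarrow> bool" where
  "computes c f \<longleftrightarrow>
     (\<forall>R. (\<forall>r\<in>regs c. r \<noteq> 0 \<longrightarrow> R r = 0) \<longrightarrow> exec c R (R(0 := f (R 0))))"

lemma computesD:
  "computes c f \<Longrightarrow> (\<And>r. r \<in> regs c \<Longrightarrow> r \<noteq> 0 \<Longrightarrow> R r = 0) \<Longrightarrow> exec c R (R(0 := f (R 0)))"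
  unfolding computes_def by blast

definition while_computable :: "(nat \<Rightarrow> nat) \<Rightarrow> bool" where
  "while_computable f \<longleftrightarrow> (\<exists>c. computes c f)"

lemma while_computable_imp_computable:
  assumes "while_computable f"
  shows "computable f"
proof -
  obtain c where c: "computes c f"
    using assms unfolding while_computable_def by blast
  let ?z = "Suc (Max (regs c))"
  let ?p = "compile ?z c"
  have "phi (list_encode (map encode_instr ?p)) x = Some (f x)" for x
  proof -
    let ?R = "(\<lambda>_. 0::nat)(0 := x)"
    have "exec c ?R (?R(0 := f x))"
      using computesD[OF c, of ?R] by simp
    then have "reaches ?p (0, ?R) (length ?p, ?R(0 := f x))"
      using fresh_reg by (intro compile_correct) auto
    then show ?thesis
      using phi_eq_Some_if_reaches[OF decode_prog_encode] by simp
  qed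
  then show ?thesis
    unfolding computable_def by blast
qed

definition clear_cmd :: "nat \<Rightarrow> cmd" where
  "clear_cmd r = While r (Dec r)"

definition move_cmd :: "nat \<Rightarrow> nat \<Rightarrow> cmd" where
  "move_cmd a b = While a (Seq (Dec a) (Inc b))"

definition move2_cmd :: "nat \<Rightarrow> nat \<Rightarrow> nat \<Rightarrow> cmd" where
  "move2_cmd a b c = While a (Seq (Dec a) (Seq (Inc b) (Inc c)))"

definition copy_cmd :: "nat \<Rightarrow> nat \<Rightarrow> nat \<Rightarrow> cmd" where
  "copy_cmd a b t = Seq (move2_cmd a b t) (move_cmd t a)"

definition triangle_cmd :: "nat \<Rightarrow> nat \<Rightarrow> nat \<Rightarrow> cmd" where
  "triangle_cmd s w u = While s (Seq (copy_cmd s w u) (Dec s))"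

definition pair_cmd :: "nat \<Rightarrow> nat \<Rightarrow> nat \<Rightarrow> nat \<Rightarrow> nat \<Rightarrow> cmd" where
  "pair_cmd a b w s u = Seq (move2_cmd a w s) (Seq (move_cmd b s) (triangle_cmd s w u))"

lemma regs_clear_cmd [simp]: "regs (clear_cmd r) = {r}"
  by (simp add: clear_cmd_def)

lemma regs_move_cmd [simp]: "regs (move_cmd a b) = {a, b}"
  by (auto simp: move_cmd_def)

lemma regs_move2_cmd [simp]: "regs (move2_cmd a b c) = {a, b, c}"
  by (auto simp: move2_cmd_def)

lemma regs_copy_cmd [simp]: "regs (copy_cmd a b t) = {a, b, t}"
  by (auto simp: copy_cmd_def)

lemma regs_pair_cmd [simp]: "regs (pair_cmd a b w s u) = {a, b, w, s, u}"
  by (auto simp: pair_cmd_def triangle_cmd_def)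

lemma exec_clear_cmd: "exec (clear_cmd r) R (R(r := 0))"
proof (induction "R r" arbitrary: R)
  case 0
  then show ?case
    unfolding clear_cmd_def by (intro exec_eq_target[OF exec_While_exit]) auto
next
  case (Suc n)
  have dec: "exec (Dec r) R (R(r := n))"
    using exec_Dec[of r R] by (simp flip: Suc.hyps(2))
  have loop: "exec (clear_cmd r) (R(r := n)) (R(r := 0))"
    using Suc.hyps(1)[of "R(r := n)"] by simp
  show ?case
    unfolding clear_cmd_def
    by (rule exec_While_iter[OF _ dec loop[unfolded clear_cmd_def]]) (simp flip: Suc.hyps(2))
qed

lemma exec_move_cmd: "a \<noteq> b \<Longrightarrow> exec (move_cmd a b) R (R(a := 0, b := R b + R a))"
proof (induction "R a" arbitrary: R)
  case 0
  then show ?case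
    unfolding move_cmd_def by (intro exec_eq_target[OF exec_While_exit]) (auto simp: fun_eq_iff)
next
  case (Suc n)
  let ?R1 = "R(a := n, b := Suc (R b))"
  have "exec (Seq (Dec a) (Inc b)) R ?R1"
    using Suc by (intro exec_Seq[OF exec_Dec exec_eq_target[OF exec_Inc]]) (auto simp: fun_eq_iff)
  moreover have "exec (move_cmd a b) ?R1 (R(a := 0, b := R b + R a))"
    using Suc.hyps(1)[of ?R1] Suc by (auto elim: exec_eq_target simp: fun_eq_iff)
  ultimately show ?case
    using Suc.hyps(2) unfolding move_cmd_def by (auto intro: exec_While_iter)
qed

lemma exec_move2_cmd:
  "distinct [a, b, c] \<Longrightarrow> exec (move2_cmd a b c) R (R(a := 0, b := R b + R a, c := R c + R a))"
proof (induction "R a" arbitrary: R)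
  case 0
  then show ?case
    unfolding move2_cmd_def by (intro exec_eq_target[OF exec_While_exit]) (auto simp: fun_eq_iff)
next
  case (Suc n)
  let ?R1 = "R(a := n, b := Suc (R b), c := Suc (R c))"
  have "exec (Seq (Dec a) (Seq (Inc b) (Inc c))) R ?R1"
    using Suc by (intro exec_Seq[OF exec_Dec exec_Seq[OF exec_Inc exec_eq_target[OF exec_Inc]]])
      (auto simp: fun_eq_iff)
  moreover have "exec (move2_cmd a b c) ?R1 (R(a := 0, b := R b + R a, c := R c + R a))"
    using Suc.hyps(1)[of ?R1] Suc by (auto elim: exec_eq_target simp: fun_eq_iff)
  ultimately show ?case
    using Suc.hyps(2) unfolding move2_cmd_def by (auto intro: exec_While_iter)
qed

lemma exec_copy_cmd: "distinct [a, b, t] \<Longrightarrow> R t = 0 \<Longrightarrow> exec (copy_cmd a b t) R (R(b := R b + R a))"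
  unfolding copy_cmd_def
  by (rule exec_Seq[OF exec_move2_cmd exec_eq_target[OF exec_move_cmd]]) (auto simp: fun_eq_iff)

lemma exec_triangle_cmd:
  assumes "distinct [s, w, u]" and "R u = 0"
  shows "exec (triangle_cmd s w u) R (R(s := 0, w := R w + triangle (R s)))"
proof -
  have "R s = n \<Longrightarrow> R u = 0 \<Longrightarrow> exec (triangle_cmd s w u) R (R(s := 0, w := R w + triangle n))" for n
  proof (induction n arbitrary: R)
    case 0
    then show ?case
      unfolding triangle_cmd_def by (intro exec_eq_target[OF exec_While_exit]) (auto simp: fun_eq_iff)
  next
    case (Suc n)
    let ?R1 = "R(w := R w + Suc n, s := n)"
    have body: "exec (Seq (copy_cmd s w u) (Dec s)) R ?R1"
      using Suc.prems assms(1) by (intro exec_Seq[OF exec_copy_cmd exec_eq_target[OF exec_Dec]])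
        (auto simp: fun_eq_iff)
    have loop: "exec (triangle_cmd s w u) ?R1 (R(s := 0, w := R w + triangle (Suc n)))"
      using Suc.prems assms(1) by (intro exec_eq_target[OF Suc.IH]) (auto simp: fun_eq_iff)
    show ?case
      unfolding triangle_cmd_def
      by (rule exec_While_iter[OF _ body loop[unfolded triangle_cmd_def]]) (use Suc.prems(1) in simp)
  qed
  then show ?thesis
    using assms(2) by blast
qed

lemma exec_pair_cmd:
  assumes "distinct [a, b, w, s, u]" and "R w = 0" "R s = 0" "R u = 0"
  shows "exec (pair_cmd a b w s u) R (R(a := 0, b := 0, w := prod_encode (R a, R b)))"
proof -
  let ?R1 = "R(a := 0, w := R a, s := R a)"
  let ?R2 = "?R1(b := 0, s := R a + R b)"
  have "exec (move2_cmd a w s) R ?R1"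
    using assms by (intro exec_eq_target[OF exec_move2_cmd]) (auto simp: fun_eq_iff)
  moreover have "exec (move_cmd b s) ?R1 ?R2"
    using assms by (intro exec_eq_target[OF exec_move_cmd]) (auto simp: fun_eq_iff)
  moreover have "exec (triangle_cmd s w u) ?R2 (R(a := 0, b := 0, w := prod_encode (R a, R b)))"
    using assms by (intro exec_eq_target[OF exec_triangle_cmd]) (auto simp: fun_eq_iff prod_encode_def)
  ultimately show ?thesis
    unfolding pair_cmd_def by (blast intro: exec_Seq)
qed

section \<open>Unpairing\<close>

abbreviation pfst :: "nat \<Rightarrow> nat" where
  "pfst n \<equiv> fst (prod_decode n)"

abbreviation psnd :: "nat \<Rightarrow> nat" where
  "psnd n \<equiv> snd (prod_decode n)"

definition cantor_succ :: "nat \<times> nat \<Rightarrow> nat \<times> nat" where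
  "cantor_succ p = (case p of (a, b) \<Rightarrow> if b = 0 then (0, Suc a) else (Suc a, b - 1))"

lemma prod_decode_eq_cantor_succ_funpow: "prod_decode n = (cantor_succ ^^ n) (0, 0)"
proof (induction n)
  case 0
  then show ?case by (simp add: prod_decode_def prod_decode_aux.simps)
next
  case (Suc n)
  obtain a b where ab: "prod_decode n = (a, b)"
    by fastforce
  then have "prod_encode (cantor_succ (a, b)) = Suc n"
    using prod_decode_inverse[of n] by (cases b) (auto simp: cantor_succ_def prod_encode_def)
  then have "prod_decode (Suc n) = cantor_succ (a, b)"
    by (metis prod_encode_inverse)
  then show ?case
    using Suc ab by simp
qed

text \<open>Register 5 is a flag: the first loop runs (once) iff register 2 is nonzero and then clears
  the flag, so the second loop runs (once) iff register 2 is zero.\<close>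

definition cantor_succ_cmd :: cmd where
  "cantor_succ_cmd =
     Seq (copy_cmd 2 3 4) (Seq (Inc 5)
       (Seq (While 3 (Seq (clear_cmd 3) (Seq (Inc 1) (Seq (Dec 2) (Dec 5)))))
            (While 5 (Seq (Dec 5) (Seq (move_cmd 1 2) (Inc 2))))))"

lemma exec_cantor_succ_cmd:
  assumes z: "R 3 = 0" "R 4 = 0" "R 5 = 0"
  shows "exec cantor_succ_cmd R (R(1 := fst (cantor_succ (R 1, R 2)), 2 := snd (cantor_succ (R 1, R 2))))"
proof (cases "R 2")
  case 0
  let ?R2 = "R(5 := 1)"
  let ?R4 = "R(1 := 0, 2 := Suc (R 1))"
  have s1: "exec (copy_cmd 2 3 4) R R"
    by (rule exec_eq_target[OF exec_copy_cmd]) (use z 0 in \<open>auto simp: fun_eq_iff\<close>)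
  have s2: "exec (Inc 5) R ?R2"
    by (rule exec_eq_target[OF exec_Inc]) (use z in \<open>auto simp: fun_eq_iff\<close>)
  have s3: "exec (While 3 (Seq (clear_cmd 3) (Seq (Inc 1) (Seq (Dec 2) (Dec 5))))) ?R2 ?R2"
    by (rule exec_While_exit) (use z in simp)
  have body: "exec (Seq (Dec 5) (Seq (move_cmd 1 2) (Inc 2))) ?R2 ?R4"
    by (rule exec_Seq[OF exec_Dec exec_Seq[OF exec_move_cmd exec_eq_target[OF exec_Inc]]])
      (use z 0 in \<open>auto simp: fun_eq_iff\<close>)
  have s4: "exec (While 5 (Seq (Dec 5) (Seq (move_cmd 1 2) (Inc 2)))) ?R2 ?R4"
    by (rule exec_While_iter[OF _ body exec_While_exit]) (use z in simp_all)
  show ?thesis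
    unfolding cantor_succ_cmd_def
    by (rule exec_Seq[OF s1 exec_Seq[OF s2 exec_Seq[OF s3 exec_eq_target[OF s4]]]])
      (use 0 in \<open>auto simp: cantor_succ_def\<close>)
next
  case (Suc b)
  let ?R1 = "R(3 := Suc b)"
  let ?R2 = "?R1(5 := 1)"
  let ?R3 = "R(1 := Suc (R 1), 2 := b)"
  have s1: "exec (copy_cmd 2 3 4) R ?R1"
    by (rule exec_eq_target[OF exec_copy_cmd]) (use z Suc in \<open>auto simp: fun_eq_iff\<close>)
  have s2: "exec (Inc 5) ?R1 ?R2"
    by (rule exec_eq_target[OF exec_Inc]) (use z in \<open>auto simp: fun_eq_iff\<close>)
  have body: "exec (Seq (clear_cmd 3) (Seq (Inc 1) (Seq (Dec 2) (Dec 5)))) ?R2 ?R3"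
    by (rule exec_Seq[OF exec_clear_cmd exec_Seq[OF exec_Inc exec_Seq[OF exec_Dec exec_eq_target[OF exec_Dec]]]])
      (use z Suc in \<open>auto simp: fun_eq_iff\<close>)
  have s3: "exec (While 3 (Seq (clear_cmd 3) (Seq (Inc 1) (Seq (Dec 2) (Dec 5))))) ?R2 ?R3"
    by (rule exec_While_iter[OF _ body exec_While_exit]) (use z in simp_all)
  have s4: "exec (While 5 (Seq (Dec 5) (Seq (move_cmd 1 2) (Inc 2)))) ?R3 ?R3"
    by (rule exec_While_exit) (use z in simp)
  show ?thesis
    unfolding cantor_succ_cmd_def
    by (rule exec_Seq[OF s1 exec_Seq[OF s2 exec_Seq[OF s3 exec_eq_target[OF s4]]]])
      (use Suc in \<open>auto simp: cantor_succ_def fun_eq_iff\<close>)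
qed

definition unpair_cmd :: cmd where
  "unpair_cmd = While 0 (Seq (Dec 0) cantor_succ_cmd)"

lemma regs_unpair_cmd: "regs unpair_cmd = {0, 1, 2, 3, 4, 5}"
  by (auto simp: unpair_cmd_def cantor_succ_cmd_def)

lemma exec_unpair_cmd:
  assumes "R 3 = 0" "R 4 = 0" "R 5 = 0"
  shows "exec unpair_cmd R
           (R(0 := 0, 1 := fst ((cantor_succ ^^ R 0) (R 1, R 2)),
                      2 := snd ((cantor_succ ^^ R 0) (R 1, R 2))))"
  using assms
proof (induction "R 0" arbitrary: R)
  case 0
  then show ?case
    unfolding unpair_cmd_def by (intro exec_eq_target[OF exec_While_exit]) (auto simp: fun_eq_iff)
next
  case (Suc n)
  let ?R1 = "R(0 := n, 1 := fst (cantor_succ (R 1, R 2)), 2 := snd (cantor_succ (R 1, R 2)))"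
  have body: "exec (Seq (Dec 0) cantor_succ_cmd) R ?R1"
    by (rule exec_Seq[OF exec_Dec exec_eq_target[OF exec_cantor_succ_cmd]])
      (use Suc in \<open>auto simp: fun_eq_iff simp flip: Suc.hyps(2)\<close>)
  have loop: "exec unpair_cmd ?R1
      (R(0 := 0, 1 := fst ((cantor_succ ^^ R 0) (R 1, R 2)), 2 := snd ((cantor_succ ^^ R 0) (R 1, R 2))))"
    by (rule exec_eq_target[OF Suc.hyps(1)])
      (use Suc in \<open>auto simp: fun_eq_iff funpow_Suc_right simp flip: Suc.hyps(2) simp del: funpow.simps\<close>)
  show ?case
    unfolding unpair_cmd_def
    by (rule exec_While_iter[OF _ body loop[unfolded unpair_cmd_def]]) (simp flip: Suc.hyps(2))
qed

lemma computes_pfst: "computes (Seq unpair_cmd (Seq (move_cmd 1 0) (clear_cmd 2))) pfst"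
  unfolding computes_def
proof (intro allI impI)
  fix R :: "nat \<Rightarrow> nat"
  assume "\<forall>r\<in>regs (Seq unpair_cmd (Seq (move_cmd 1 0) (clear_cmd 2))). r \<noteq> 0 \<longrightarrow> R r = 0"
  then have "R 1 = 0" "R 2 = 0" "R 3 = 0" "R 4 = 0" "R 5 = 0"
    by (auto simp: regs_unpair_cmd)
  then show "exec (Seq unpair_cmd (Seq (move_cmd 1 0) (clear_cmd 2))) R (R(0 := pfst (R 0)))"
    by (intro exec_Seq[OF exec_unpair_cmd exec_Seq[OF exec_move_cmd exec_eq_target[OF exec_clear_cmd]]])
      (auto simp: fun_eq_iff prod_decode_eq_cantor_succ_funpow)
qed

lemma computes_psnd: "computes (Seq unpair_cmd (Seq (move_cmd 2 0) (clear_cmd 1))) psnd"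
  unfolding computes_def
proof (intro allI impI)
  fix R :: "nat \<Rightarrow> nat"
  assume "\<forall>r\<in>regs (Seq unpair_cmd (Seq (move_cmd 2 0) (clear_cmd 1))). r \<noteq> 0 \<longrightarrow> R r = 0"
  then have "R 1 = 0" "R 2 = 0" "R 3 = 0" "R 4 = 0" "R 5 = 0"
    by (auto simp: regs_unpair_cmd)
  then show "exec (Seq unpair_cmd (Seq (move_cmd 2 0) (clear_cmd 1))) R (R(0 := psnd (R 0)))"
    by (intro exec_Seq[OF exec_unpair_cmd exec_Seq[OF exec_move_cmd exec_eq_target[OF exec_clear_cmd]]])
      (auto simp: fun_eq_iff prod_decode_eq_cantor_succ_funpow)
qed

section \<open>Closure properties of while-computable functions\<close>

lemma while_computable_cong: "while_computable f \<Longrightarrow> (\<And>x. f x = g x) \<Longrightarrow> while_computable g"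
  by (metis ext)

lemma while_computable_id: "while_computable (\<lambda>x. x)"
  unfolding while_computable_def computes_def
  by (rule exI[of _ "Seq (Inc 0) (Dec 0)"]) (auto intro!: exec_Seq[OF exec_Inc exec_eq_target[OF exec_Dec]])

lemma while_computable_comp:
  assumes "while_computable f" "while_computable g"
  shows "while_computable (\<lambda>x. f (g x))"
proof -
  obtain cf cg where cf: "computes cf f" and cg: "computes cg g"
    using assms unfolding while_computable_def by blast
  have "computes (Seq cg cf) (\<lambda>x. f (g x))"
    unfolding computes_def
  proof (intro allI impI)
    fix R :: "nat \<Rightarrow> nat"
    assume "\<forall>r\<in>regs (Seq cg cf). r \<noteq> 0 \<longrightarrow> R r = 0"
    then have "exec cg R (R(0 := g (R 0)))" and "exec cf (R(0 := g (R 0))) (R(0 := f (g (R 0))))"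
      using computesD[OF cg, of R] computesD[OF cf, of "R(0 := g (R 0))"] by auto
    then show "exec (Seq cg cf) R (R(0 := f (g (R 0))))"
      by (rule exec_Seq)
  qed
  then show ?thesis
    unfolding while_computable_def by blast
qed

lemma while_computable_Suc:
  assumes "while_computable f"
  shows "while_computable (\<lambda>x. Suc (f x))"
proof -
  have "computes (Inc 0) Suc"
    unfolding computes_def by (auto intro: exec_eq_target[OF exec_Inc])
  then show ?thesis
    using while_computable_comp[of Suc f] assms unfolding while_computable_def by blast
qed

lemma while_computable_pred:
  assumes "while_computable f"
  shows "while_computable (\<lambda>x. f x - 1)"
proof -
  have "computes (Dec 0) (\<lambda>x. x - 1)"
    unfolding computes_def by (auto intro: exec_eq_target[OF exec_Dec])
  then show ?thesis
    using while_computable_comp[of "\<lambda>x. x - 1" f] assms unfolding while_computable_def by blast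
qed

lemma while_computable_const: "while_computable (\<lambda>x. k)"
proof (induction k)
  case 0
  have "computes (clear_cmd 0) (\<lambda>x. 0)"
    unfolding computes_def by (auto intro: exec_eq_target[OF exec_clear_cmd])
  then show ?case
    unfolding while_computable_def by blast
next
  case (Suc k)
  then show ?case
    by (rule while_computable_Suc)
qed

lemma while_computable_pfst: "while_computable f \<Longrightarrow> while_computable (\<lambda>x. pfst (f x))"
  using computes_pfst while_computable_comp[of pfst f] unfolding while_computable_def by blast

lemma while_computable_psnd: "while_computable f \<Longrightarrow> while_computable (\<lambda>x. psnd (f x))"
  using computes_psnd while_computable_comp[of psnd f] unfolding while_computable_def by blast

definition aside_cmd :: "cmd \<Rightarrow> nat \<Rightarrow> cmd" where
  "aside_cmd c K = Seq (copy_cmd 0 K (K + 2)) (Seq c (Seq (move_cmd 0 (K + 1)) (move_cmd K 0)))"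

lemma regs_aside_cmd: "regs (aside_cmd c K) = regs c \<union> {0, K, K + 1, K + 2}"
  by (auto simp: aside_cmd_def)

lemma exec_aside_cmd:
  assumes c: "computes c f" and K: "\<forall>r\<in>regs c. r < K" "0 < K"
    and zero: "S K = 0" "S (K + 1) = 0" "S (K + 2) = 0" "\<And>r. r \<in> regs c \<Longrightarrow> r \<noteq> 0 \<Longrightarrow> S r = 0"
  shows "exec (aside_cmd c K) S (S(K + 1 := f (S 0)))"
proof -
  let ?x = "S 0"
  let ?S1 = "S(K := ?x)"
  let ?S2 = "?S1(0 := f ?x)"
  let ?S3 = "?S2(0 := 0, K + 1 := f ?x)"
  have "exec (copy_cmd 0 K (K + 2)) S ?S1"
    using zero K by (intro exec_eq_target[OF exec_copy_cmd]) (auto simp: fun_eq_iff)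
  moreover have "exec c ?S1 ?S2"
    using zero K by (intro exec_eq_target[OF computesD[OF c]]) (fastforce simp: fun_eq_iff)+
  moreover have "exec (move_cmd 0 (K + 1)) ?S2 ?S3"
    using zero by (intro exec_eq_target[OF exec_move_cmd]) (auto simp: fun_eq_iff)
  moreover have "exec (move_cmd K 0) ?S3 (S(K + 1 := f ?x))"
    using zero K by (intro exec_eq_target[OF exec_move_cmd]) (auto simp: fun_eq_iff)
  ultimately show ?thesis
    unfolding aside_cmd_def by (blast intro: exec_Seq)
qed

lemma regs_less_fresh: "r \<in> regs c \<union> regs d \<Longrightarrow> r < Suc (Max (regs c \<union> regs d))"
  using Max_ge[of "regs c \<union> regs d" r] finite_regs by (simp add: less_Suc_eq_le)

lemma while_computable_pair:
  assumes "while_computable f" "while_computable g"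
  shows "while_computable (\<lambda>x. prod_encode (f x, g x))"
proof -
  obtain cf cg where cf: "computes cf f" and cg: "computes cg g"
    using assms unfolding while_computable_def by blast
  define K where "K = Suc (Max (regs cf \<union> regs cg))"
  have K: "\<forall>r\<in>regs cf. r < K" "\<forall>r\<in>regs cg. r < K" "K \<noteq> 0"
    using regs_less_fresh unfolding K_def by auto
  define P where
    "P = Seq (aside_cmd cf K) (Seq cg (Seq (move_cmd 0 K) (pair_cmd (K + 1) K 0 (K + 2) (K + 3))))"
  have "computes P (\<lambda>x. prod_encode (f x, g x))"
    unfolding computes_def
  proof (intro allI impI)
    fix R :: "nat \<Rightarrow> nat"
    assume "\<forall>r\<in>regs P. r \<noteq> 0 \<longrightarrow> R r = 0"
    then have zero: "R K = 0" "R (K + 1) = 0" "R (K + 2) = 0" "R (K + 3) = 0"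
      and zero_f: "\<And>r. r \<in> regs cf \<Longrightarrow> r \<noteq> 0 \<Longrightarrow> R r = 0"
      and zero_g: "\<And>r. r \<in> regs cg \<Longrightarrow> r \<noteq> 0 \<Longrightarrow> R r = 0"
      using K by (auto simp: P_def regs_aside_cmd)
    let ?x = "R 0"
    let ?R1 = "R(K + 1 := f ?x)"
    let ?R2 = "?R1(0 := g ?x)"
    let ?R3 = "?R2(0 := 0, K := g ?x)"
    have "exec (aside_cmd cf K) R ?R1"
      using zero zero_f K by (intro exec_aside_cmd[OF cf]) auto
    moreover have "exec cg ?R1 ?R2"
      using zero_g K by (intro exec_eq_target[OF computesD[OF cg]]) (fastforce simp: fun_eq_iff)+
    moreover have "exec (move_cmd 0 K) ?R2 ?R3"
      using zero K by (intro exec_eq_target[OF exec_move_cmd]) (auto simp: fun_eq_iff)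
    moreover have "exec (pair_cmd (K + 1) K 0 (K + 2) (K + 3)) ?R3 (R(0 := prod_encode (f ?x, g ?x)))"
      using zero K by (intro exec_eq_target[OF exec_pair_cmd]) (auto simp: fun_eq_iff)
    ultimately show "exec P R (R(0 := prod_encode (f ?x, g ?x)))"
      unfolding P_def by (blast intro: exec_Seq)
  qed
  then show ?thesis
    unfolding while_computable_def by blast
qed

lemmas while_computable_intros =
  while_computable_id while_computable_const while_computable_Suc
  while_computable_pred while_computable_pred[simplified]
  while_computable_pfst while_computable_psnd while_computable_pair

definition iterate_until :: "(nat \<Rightarrow> nat) \<Rightarrow> (nat \<Rightarrow> nat) \<Rightarrow> nat \<Rightarrow> nat" where
  "iterate_until t h x = (h ^^ (LEAST n. t ((h ^^ n) x) = 0)) x"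

lemma iterate_until_stop: "t x = 0 \<Longrightarrow> iterate_until t h x = x"
  unfolding iterate_until_def by (subst Least_eq_0) auto

lemma iterate_until_continue:
  assumes "t x \<noteq> 0" "t ((h ^^ n) x) = 0"
  shows "iterate_until t h x = iterate_until t h (h x)"
proof -
  have "(LEAST n. t ((h ^^ n) x) = 0) = Suc (LEAST m. t ((h ^^ Suc m) x) = 0)"
    by (rule Least_Suc[of "\<lambda>n. t ((h ^^ n) x) = 0", OF assms(2)]) (use assms(1) in simp)
  then show ?thesis
    unfolding iterate_until_def by (simp add: funpow_Suc_right del: funpow.simps)
qed

definition until_loop_cmd :: "cmd \<Rightarrow> cmd \<Rightarrow> nat \<Rightarrow> cmd" where
  "until_loop_cmd ct ch K = While (K + 1) (Seq (clear_cmd (K + 1)) (Seq ch (aside_cmd ct K)))"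

lemma exec_until_loop_cmd:
  assumes ct: "computes ct t" and ch: "computes ch h"
    and K: "\<forall>r\<in>regs ct. r < K" "\<forall>r\<in>regs ch. r < K" "0 < K"
    and zero: "S K = 0" "S (K + 1) = 0" "S (K + 2) = 0"
      "\<And>r. r \<in> regs ct \<union> regs ch \<Longrightarrow> r \<noteq> 0 \<Longrightarrow> S r = 0"
    and "t ((h ^^ n) y) = 0"
  shows "exec (until_loop_cmd ct ch K) (S(0 := y, K + 1 := t y)) (S(0 := iterate_until t h y))"
  using \<open>t ((h ^^ n) y) = 0\<close>
proof (induction n arbitrary: y)
  case 0
  then show ?case
    using zero K unfolding until_loop_cmd_def
    by (intro exec_eq_target[OF exec_While_exit]) (auto simp: iterate_until_stop fun_eq_iff)
next
  case (Suc n)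
  show ?case
  proof (cases "t y = 0")
    case True
    then show ?thesis
      using zero K unfolding until_loop_cmd_def
      by (intro exec_eq_target[OF exec_While_exit]) (auto simp: iterate_until_stop fun_eq_iff)
  next
    case False
    have "exec (clear_cmd (K + 1)) (S(0 := y, K + 1 := t y)) (S(0 := y))"
      using zero by (intro exec_eq_target[OF exec_clear_cmd]) (auto simp: fun_eq_iff)
    moreover have "exec ch (S(0 := y)) (S(0 := h y))"
      using zero K by (intro exec_eq_target[OF computesD[OF ch]]) (auto simp: fun_eq_iff)
    moreover have "exec (aside_cmd ct K) (S(0 := h y)) (S(0 := h y, K + 1 := t (h y)))"
      using zero K by (intro exec_eq_target[OF exec_aside_cmd[OF ct]]) (auto simp: fun_eq_iff)
    ultimately have body: "exec (Seq (clear_cmd (K + 1)) (Seq ch (aside_cmd ct K)))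
        (S(0 := y, K + 1 := t y)) (S(0 := h y, K + 1 := t (h y)))"
      by (blast intro: exec_Seq)
    have "t ((h ^^ n) (h y)) = 0"
      using Suc.prems by (simp add: funpow_Suc_right del: funpow.simps)
    then have rest: "exec (until_loop_cmd ct ch K) (S(0 := h y, K + 1 := t (h y)))
        (S(0 := iterate_until t h (h y)))"
      by (rule Suc.IH)
    show ?thesis
      unfolding iterate_until_continue[OF False Suc.prems] until_loop_cmd_def
      by (rule exec_While_iter[OF _ body rest[unfolded until_loop_cmd_def]]) (use False in simp)
  qed
qed

lemma while_computable_iterate_until:
  assumes "while_computable t" "while_computable h" and terminates: "\<And>x. \<exists>n. t ((h ^^ n) x) = 0"
  shows "while_computable (iterate_until t h)"
proof -
  obtain ct ch where ct: "computes ct t" and ch: "computes ch h"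
    using assms unfolding while_computable_def by blast
  define K where "K = Suc (Max (regs ct \<union> regs ch))"
  have K: "\<forall>r\<in>regs ct. r < K" "\<forall>r\<in>regs ch. r < K" "0 < K"
    using regs_less_fresh unfolding K_def by auto
  have "computes (Seq (aside_cmd ct K) (until_loop_cmd ct ch K)) (iterate_until t h)"
    unfolding computes_def
  proof (intro allI impI)
    fix R :: "nat \<Rightarrow> nat"
    assume "\<forall>r\<in>regs (Seq (aside_cmd ct K) (until_loop_cmd ct ch K)). r \<noteq> 0 \<longrightarrow> R r = 0"
    then have zero: "R K = 0" "R (K + 1) = 0" "R (K + 2) = 0"
      "\<And>r. r \<in> regs ct \<union> regs ch \<Longrightarrow> r \<noteq> 0 \<Longrightarrow> R r = 0"
      using K by (auto simp: until_loop_cmd_def regs_aside_cmd)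
    obtain n where "t ((h ^^ n) (R 0)) = 0"
      using terminates by blast
    then have "exec (until_loop_cmd ct ch K) (R(K + 1 := t (R 0))) (R(0 := iterate_until t h (R 0)))"
      using exec_until_loop_cmd[OF ct ch K zero, of n "R 0"] by simp
    moreover have "exec (aside_cmd ct K) R (R(K + 1 := t (R 0)))"
      using exec_aside_cmd[OF ct] zero K by blast
    ultimately show "exec (Seq (aside_cmd ct K) (until_loop_cmd ct ch K)) R (R(0 := iterate_until t h (R 0)))"
      by (blast intro: exec_Seq)
  qed
  then show ?thesis
    unfolding while_computable_def by blast
qed

lemma while_computable_tailrec:
  fixes \<mu> :: "nat \<Rightarrow> nat"
  assumes "while_computable t" "while_computable h" "while_computable e"
    and decreasing: "\<And>x. t x \<noteq> 0 \<Longrightarrow> \<mu> (h x) < \<mu> x"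
    and F: "\<And>x. F x = (if t x = 0 then e x else F (h x))"
  shows "while_computable F"
proof -
  have terminates: "\<exists>n. t ((h ^^ n) x) = 0" for x
  proof (induction x rule: measure_induct_rule[of \<mu>])
    case (less x)
    show ?case
    proof (cases "t x = 0")
      case True
      then show ?thesis
        by (intro exI[of _ 0]) simp
    next
      case False
      then obtain n where "t ((h ^^ n) (h x)) = 0"
        using less decreasing by blast
      then show ?thesis
        by (intro exI[of _ "Suc n"]) (simp add: funpow_Suc_right del: funpow.simps)
    qed
  qed
  have F_eq: "F x = e (iterate_until t h x)" for x
  proof (induction x rule: measure_induct_rule[of \<mu>])
    case (less x)
    show ?case
    proof (cases "t x = 0")
      case True
      then show ?thesis
        using F[of x] by (simp add: iterate_until_stop)
    next
      case False
      obtain n where n: "t ((h ^^ n) x) = 0"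
        using terminates by blast
      have "F x = F (h x)"
        using F[of x] False by simp
      also have "\<dots> = e (iterate_until t h (h x))"
        using less decreasing False by blast
      also have "\<dots> = e (iterate_until t h x)"
        using iterate_until_continue[OF False n] by simp
      finally show ?thesis .
    qed
  qed
  show ?thesis
    using while_computable_comp[OF assms(3) while_computable_iterate_until[OF assms(1,2) terminates]]
    by (rule while_computable_cong) (simp add: F_eq)
qed

lemma while_computable_binary:
  "while_computable (\<lambda>s. F (pfst s) (psnd s)) \<Longrightarrow> while_computable f \<Longrightarrow> while_computable g \<Longrightarrow>
   while_computable (\<lambda>x. F (f x) (g x))"
  using while_computable_comp[OF _ while_computable_pair, of "\<lambda>s. F (pfst s) (psnd s)" f g] by simp

text \<open>A conditional is a tail recursion that stops after at most one step.\<close>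

lemma while_computable_if_zero:
  assumes "while_computable a" "while_computable b" "while_computable c"
  shows "while_computable (\<lambda>x. if a x = 0 then b x else c x)"
proof -
  define G where "G s = (if pfst s = 0 then pfst (psnd s) else psnd (psnd s))" for s
  have "while_computable G"
    by (rule while_computable_tailrec[where t = pfst and h = "\<lambda>s. prod_encode (0, prod_encode (psnd (psnd s), 0))"
          and e = "\<lambda>s. pfst (psnd s)" and \<mu> = pfst])
      (auto simp: G_def intro!: while_computable_intros)
  show ?thesis
    by (rule while_computable_cong[OF while_computable_comp[OF \<open>while_computable G\<close>
          while_computable_pair[OF assms(1) while_computable_pair[OF assms(2,3)]]]]) (auto simp: G_def)
qed

definition while_decidable :: "(nat \<Rightarrow> bool) \<Rightarrow> bool" where
  "while_decidable P \<longleftrightarrow> while_computable (\<lambda>x. if P x then 1 else 0)"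

lemma while_computable_if:
  assumes "while_decidable P" "while_computable f" "while_computable g"
  shows "while_computable (\<lambda>x. if P x then f x else g x)"
proof -
  have "while_computable (\<lambda>x. if (if P x then 1 else 0) = (0::nat) then g x else f x)"
    using assms(1) unfolding while_decidable_def by (rule while_computable_if_zero[OF _ assms(3,2)])
  then show ?thesis
    by (rule while_computable_cong) auto
qed

lemma while_computable_add:
  assumes "while_computable f" "while_computable g"
  shows "while_computable (\<lambda>x. f x + g x)"
proof -
  have "while_computable (\<lambda>s. pfst s + psnd s)"
    by (rule while_computable_tailrec[where t = pfst and h = "\<lambda>s. prod_encode (pfst s - 1, Suc (psnd s))"
          and e = psnd and \<mu> = pfst])
      (auto intro!: while_computable_intros)
  then show ?thesis
    using assms by (rule while_computable_binary[where F = "(+)"])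
qed

lemma while_computable_diff:
  assumes "while_computable f" "while_computable g"
  shows "while_computable (\<lambda>x. f x - g x)"
proof -
  have "while_computable (\<lambda>s. pfst s - psnd s)"
    by (rule while_computable_tailrec[where t = psnd and h = "\<lambda>s. prod_encode (pfst s - 1, psnd s - 1)"
          and e = pfst and \<mu> = psnd])
      (auto intro!: while_computable_intros)
  then show ?thesis
    using assms by (rule while_computable_binary[where F = "(-)"])
qed

lemma while_decidable_eq:
  assumes "while_computable f" "while_computable g"
  shows "while_decidable (\<lambda>x. f x = g x)"
proof -
  have "while_computable (\<lambda>x. if (f x - g x) + (g x - f x) = 0 then 1 else 0)"
    using assms by (intro while_computable_if_zero while_computable_add while_computable_diff
        while_computable_const)
  then show ?thesis
    unfolding while_decidable_def by (rule while_computable_cong) auto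
qed

lemma while_decidable_le:
  assumes "while_computable f" "while_computable g"
  shows "while_decidable (\<lambda>x. f x \<le> g x)"
proof -
  have "while_computable (\<lambda>x. if f x - g x = 0 then 1 else 0)"
    using assms by (intro while_computable_if_zero while_computable_diff while_computable_const)
  then show ?thesis
    unfolding while_decidable_def by (rule while_computable_cong) auto
qed

lemma while_decidable_less:
  "while_computable f \<Longrightarrow> while_computable g \<Longrightarrow> while_decidable (\<lambda>x. f x < g x)"
  using while_decidable_le[OF while_computable_Suc] by (simp add: Suc_le_eq)

lemma while_decidable_not: "while_decidable P \<Longrightarrow> while_decidable (\<lambda>x. \<not> P x)"
  unfolding while_decidable_def
  by (rule while_computable_cong[OF while_computable_if[of P "\<lambda>x. 0" "\<lambda>x. 1"]])
    (auto simp: while_decidable_def while_computable_const)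

lemma while_decidable_conj:
  "while_decidable P \<Longrightarrow> while_decidable Q \<Longrightarrow> while_decidable (\<lambda>x. P x \<and> Q x)"
  unfolding while_decidable_def
  by (rule while_computable_cong[OF while_computable_if[of P "\<lambda>x. if Q x then 1 else 0" "\<lambda>x. 0"]])
    (auto simp: while_decidable_def while_computable_const)

lemma while_decidable_disj:
  "while_decidable P \<Longrightarrow> while_decidable Q \<Longrightarrow> while_decidable (\<lambda>x. P x \<or> Q x)"
  unfolding while_decidable_def
  by (rule while_computable_cong[OF while_computable_if[of P "\<lambda>x. 1" "\<lambda>x. if Q x then 1 else 0"]])
    (auto simp: while_decidable_def while_computable_const)

lemma while_decidable_imp:
  "while_decidable P \<Longrightarrow> while_decidable Q \<Longrightarrow> while_decidable (\<lambda>x. P x \<longrightarrow> Q x)"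
  unfolding while_decidable_def
  by (rule while_computable_cong[OF while_computable_if[of P "\<lambda>x. if Q x then 1 else 0" "\<lambda>x. 1"]])
    (auto simp: while_decidable_def while_computable_const)

lemma while_decidable_comp: "while_decidable P \<Longrightarrow> while_computable f \<Longrightarrow> while_decidable (\<lambda>x. P (f x))"
  unfolding while_decidable_def by (rule while_computable_comp[where f = "\<lambda>x. if P x then 1 else 0"])

lemma while_decidable_binary:
  "while_decidable (\<lambda>s. P (pfst s) (psnd s)) \<Longrightarrow> while_computable f \<Longrightarrow> while_computable g \<Longrightarrow>
   while_decidable (\<lambda>x. P (f x) (g x))"
  unfolding while_decidable_def by (rule while_computable_binary[where F = "\<lambda>a b. if P a b then 1 else 0"])

lemma while_computable_funpow:
  assumes H: "while_computable (\<lambda>q. H (pfst q) (psnd q))"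
    and "while_computable a" "while_computable n" "while_computable s"
  shows "while_computable (\<lambda>x. (H (a x) ^^ n x) (s x))"
proof -
  define G where "G q = (H (pfst q) ^^ pfst (psnd q)) (psnd (psnd q))" for q
  define step where
    "step q = prod_encode (pfst q, prod_encode (pfst (psnd q) - 1, H (pfst q) (psnd (psnd q))))" for q
  have "while_computable (\<lambda>q. H (pfst q) (psnd (psnd q)))"
    by (rule while_computable_binary[OF H]) (intro while_computable_intros)+
  then have step_computable: "while_computable step"
    unfolding step_def by (intro while_computable_intros)
  have G_eq: "G q = (if pfst (psnd q) = 0 then psnd (psnd q) else G (step q))" for q
    by (cases "pfst (psnd q)") (simp_all add: G_def step_def funpow_Suc_right del: funpow.simps)
  have "while_computable G"
    by (rule while_computable_tailrec[where t = "\<lambda>q. pfst (psnd q)" and e = "\<lambda>q. psnd (psnd q)"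
          and \<mu> = "\<lambda>q. pfst (psnd q)", OF _ step_computable _ _ G_eq])
      (auto simp: step_def intro!: while_computable_intros)
  then show ?thesis
    by (rule while_computable_cong[OF while_computable_comp[OF _ while_computable_pair[OF assms(2)
          while_computable_pair[OF assms(3,4)]]]]) (simp add: G_def)
qed

lemma while_decidable_bounded_ex:
  assumes P: "while_decidable (\<lambda>q. P (pfst q) (psnd q))" and n: "while_computable n"
  shows "while_decidable (\<lambda>x. \<exists>i<n x. P i x)"
proof -
  define G where "G q = (if \<exists>i<psnd q. P i (pfst q) then 1 else (0::nat))" for q
  define t where "t q = (if psnd q = 0 \<or> P (psnd q - 1) (pfst q) then 0 else (1::nat))" for q
  define e where "e q = (if psnd q = 0 then 0 else (1::nat))" for q
  have "while_decidable (\<lambda>q. P (psnd q - 1) (pfst q))"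
    by (rule while_decidable_binary[OF P]) (intro while_computable_intros)+
  then have t_computable: "while_computable t"
    unfolding t_def by (intro while_computable_if while_decidable_disj while_decidable_eq while_computable_intros)
  have e_computable: "while_computable e"
    unfolding e_def by (intro while_computable_if while_decidable_eq while_computable_intros)
  have "(\<exists>i<Suc k. P i y) \<longleftrightarrow> P k y \<or> (\<exists>i<k. P i y)" for k y
    using less_Suc_eq by auto
  then have G_eq: "G q = (if t q = 0 then e q else G (prod_encode (pfst q, psnd q - 1)))" for q
    by (cases "psnd q") (auto simp: G_def t_def e_def)
  have h_computable: "while_computable (\<lambda>q. prod_encode (pfst q, psnd q - 1))"
    by (intro while_computable_intros)
  have decreasing: "t q \<noteq> 0 \<Longrightarrow> psnd (prod_encode (pfst q, psnd q - 1)) < psnd q" for q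
    by (simp add: t_def split: if_splits)
  have "while_computable G"
    using t_computable h_computable e_computable decreasing G_eq by (rule while_computable_tailrec)
  then show ?thesis
    unfolding while_decidable_def
    by (rule while_computable_cong[OF while_computable_comp[OF _ while_computable_pair[OF while_computable_id n]]])
      (simp add: G_def)
qed

lemma while_decidable_bounded_all:
  assumes "while_decidable (\<lambda>q. P (pfst q) (psnd q))" and "while_computable n"
  shows "while_decidable (\<lambda>x. \<forall>i<n x. P i x)"
  using while_decidable_not[OF while_decidable_bounded_ex[OF while_decidable_not[OF assms(1)] assms(2)]]
  by simp

lemma while_computable_div2:
  assumes "while_computable f"
  shows "while_computable (\<lambda>x. f x div 2)"
proof -
  have "while_computable (\<lambda>s. psnd s + pfst s div 2)"
    by (rule while_computable_tailrec[where t = "\<lambda>s. if pfst s < 2 then 0 else 1"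
          and h = "\<lambda>s. prod_encode (pfst s - 2, Suc (psnd s))" and e = psnd and \<mu> = pfst])
      (auto simp: div_if intro!: while_computable_intros while_computable_if while_decidable_less
        while_computable_diff split: if_splits)
  then show ?thesis
    by (rule while_computable_cong[OF while_computable_comp[OF _ while_computable_pair[OF assms
          while_computable_const[of 0]]]]) simp
qed

lemma while_decidable_even:
  assumes "while_computable f"
  shows "while_decidable (\<lambda>x. even (f x))"
proof -
  have "while_decidable (\<lambda>x. f x = f x div 2 + f x div 2)"
    by (intro while_decidable_eq while_computable_add while_computable_div2 assms)
  moreover have "even n \<longleftrightarrow> n = n div 2 + n div 2" for n :: nat
    by presburger
  ultimately show ?thesis
    by simp
qed

lemma while_computable_pow2:
  assumes "while_computable f"
  shows "while_computable (\<lambda>x. 2 ^ f x)"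
proof -
  have "((\<lambda>v. v + v) ^^ k) 1 = (2::nat) ^ k" for k
    by (induction k) auto
  moreover have "while_computable (\<lambda>q. psnd q + psnd q)"
    by (intro while_computable_add while_computable_intros)
  then have "while_computable (\<lambda>x. ((\<lambda>v. v + v) ^^ f x) 1)"
    using while_computable_funpow[where H = "\<lambda>a v. v + v", OF _ while_computable_const assms
        while_computable_const] by simp
  ultimately show ?thesis
    by simp
qed

lemma while_computable_plen: "while_computable plen"
proof -
  have "while_computable (\<lambda>s. psnd s + plen (pfst s))"
    by (rule while_computable_tailrec[where t = "\<lambda>s. if pfst s < 2 then 0 else 1"
          and h = "\<lambda>s. prod_encode (pfst s div 2, Suc (psnd s))" and e = "\<lambda>s. Suc (psnd s)" and \<mu> = pfst])
      (auto intro!: while_computable_intros while_computable_if while_decidable_less while_computable_div2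
        split: if_splits)
  then show ?thesis
    by (rule while_computable_cong[OF while_computable_comp[OF _ while_computable_pair[OF while_computable_id
          while_computable_const[of 0]]]]) simp
qed

section \<open>Simulating counter machines by while programs\<close>

text \<open>Lists of numbers are coded by \<open>list_encode\<close>: the code of \<open>x # xs\<close> is
  \<open>Suc (prod_encode (x, list_encode xs))\<close> and the code of \<open>[]\<close> is 0.\<close>

definition code_hd :: "nat \<Rightarrow> nat" where
  "code_hd n = pfst (n - 1)"

definition code_tl :: "nat \<Rightarrow> nat" where
  "code_tl n = psnd (n - 1)"

definition code_drop :: "nat \<Rightarrow> nat \<Rightarrow> nat" where
  "code_drop k n = (code_tl ^^ k) n"

lemma code_tl_less: "n \<noteq> 0 \<Longrightarrow> code_tl n < n"
  using le_prod_encode_2[where a = "pfst (n - 1)" and b = "psnd (n - 1)"] by (simp add: code_tl_def)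

lemma code_drop_0: "code_drop k 0 = 0"
proof -
  have "code_tl 0 = 0"
    by (simp add: code_tl_def prod_decode_def prod_decode_aux.simps)
  then show ?thesis
    unfolding code_drop_def by (induction k) auto
qed

lemma list_decode_Suc: "list_decode (Suc m) = pfst m # list_decode (psnd m)"
  by (simp split: prod.split)

lemma code_drop_list_decode:
  "(i < length (list_decode n) \<longleftrightarrow> code_drop i n \<noteq> 0) \<and>
   (i < length (list_decode n) \<longrightarrow> list_decode n ! i = code_hd (code_drop i n))"
proof (induction i arbitrary: n)
  case 0
  show ?case
    by (cases n) (auto simp: code_drop_def code_hd_def list_decode_Suc simp del: list_decode.simps(2))
next
  case (Suc i)
  show ?case
  proof (cases n)
    case 0
    then show ?thesis
      by (simp add: code_drop_0 del: list_decode.simps(2))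
  next
    case (Suc m)
    then have "code_drop (Suc i) n = code_drop i (psnd m)"
      by (simp add: code_drop_def funpow_Suc_right code_tl_def del: funpow.simps)
    then show ?thesis
      using Suc.IH[of "psnd m"] Suc by (simp add: list_decode_Suc del: list_decode.simps)
  qed
qed

lemma while_computable_code_hd: "while_computable f \<Longrightarrow> while_computable (\<lambda>x. code_hd (f x))"
  unfolding code_hd_def by (intro while_computable_intros)

lemma while_computable_code_tl: "while_computable f \<Longrightarrow> while_computable (\<lambda>x. code_tl (f x))"
  unfolding code_tl_def by (intro while_computable_intros)

lemma while_computable_code_drop:
  "while_computable f \<Longrightarrow> while_computable g \<Longrightarrow> while_computable (\<lambda>x. code_drop (f x) (g x))"
  using while_computable_funpow[where H = "\<lambda>a v. code_tl v", OF
      while_computable_code_tl[OF while_computable_psnd[OF while_computable_id]] while_computable_const[of 0]]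
  by (simp add: code_drop_def)

text \<open>A register file is coded as an association list of (register, content) pairs; the first entry
  for a register counts, registers without entry hold 0.\<close>

definition assoc_cons :: "nat \<Rightarrow> nat \<Rightarrow> nat \<Rightarrow> nat" where
  "assoc_cons k v n = Suc (prod_encode (prod_encode (k, v), n))"

function assoc_lookup :: "nat \<Rightarrow> nat \<Rightarrow> nat" where
  "assoc_lookup r n =
     (if n = 0 then 0
      else if pfst (code_hd n) = r then psnd (code_hd n)
      else assoc_lookup r (code_tl n))"
  by pat_completeness auto
termination
  by (relation "measure snd") (auto simp: code_tl_less)

declare assoc_lookup.simps [simp del]

lemma assoc_lookup_0 [simp]: "assoc_lookup r 0 = 0"
  by (subst assoc_lookup.simps) simp

lemma assoc_lookup_cons [simp]: "assoc_lookup r (assoc_cons k v n) = (if k = r then v else assoc_lookup r n)"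
  by (subst assoc_lookup.simps) (simp add: assoc_cons_def code_hd_def code_tl_def)

lemma while_computable_assoc_lookup:
  assumes "while_computable f" "while_computable g"
  shows "while_computable (\<lambda>x. assoc_lookup (f x) (g x))"
proof -
  define t where "t q = (if psnd q = 0 \<or> pfst (code_hd (psnd q)) = pfst q then 0 else (1::nat))" for q
  define e where "e q = (if psnd q = 0 then 0 else psnd (code_hd (psnd q)))" for q
  have "while_computable t"
    unfolding t_def
    by (intro while_computable_if while_decidable_disj while_decidable_eq while_computable_code_hd
        while_computable_intros)
  moreover have "while_computable (\<lambda>q. prod_encode (pfst q, code_tl (psnd q)))"
    by (intro while_computable_code_tl while_computable_intros)
  moreover have "while_computable e"
    unfolding e_def
    by (intro while_computable_if while_decidable_eq while_computable_code_hd while_computable_intros)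
  moreover have "t q \<noteq> 0 \<Longrightarrow> psnd (prod_encode (pfst q, code_tl (psnd q))) < psnd q" for q
    by (auto simp: t_def code_tl_less split: if_splits)
  moreover have "assoc_lookup (pfst q) (psnd q) =
      (if t q = 0 then e q else assoc_lookup (pfst (prod_encode (pfst q, code_tl (psnd q))))
                                             (psnd (prod_encode (pfst q, code_tl (psnd q)))))" for q
    by (subst assoc_lookup.simps) (auto simp: t_def e_def)
  ultimately have "while_computable (\<lambda>q. assoc_lookup (pfst q) (psnd q))"
    by (rule while_computable_tailrec)
  then show ?thesis
    using assms by (rule while_computable_binary)
qed

definition represents :: "nat \<Rightarrow> config \<Rightarrow> bool" where
  "represents s c \<longleftrightarrow> pfst s = fst c \<and> (\<forall>r. assoc_lookup r (psnd s) = snd c r)"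

definition instr_step_code :: "nat \<Rightarrow> nat \<Rightarrow> nat" where
  "instr_step_code i s =
     (let a = i div 2; pc = pfst s; rs = psnd s in
      if even i then prod_encode (Suc pc, assoc_cons a (Suc (assoc_lookup a rs)) rs)
      else if assoc_lookup (pfst a) rs = 0 then prod_encode (psnd a, rs)
      else prod_encode (Suc pc, assoc_cons (pfst a) (assoc_lookup (pfst a) rs - 1) rs))"

definition step_code :: "nat \<Rightarrow> nat \<Rightarrow> nat" where
  "step_code g s = (let d = code_drop (pfst s) g in if d = 0 then s else instr_step_code (code_hd d) s)"

definition run_code :: "nat \<Rightarrow> nat \<Rightarrow> nat \<Rightarrow> nat" where
  "run_code g x t = (step_code g ^^ t) (prod_encode (0, assoc_cons 0 x 0))"

lemma represents_instr_step_code: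
  assumes s: "represents s (pc, R)" and pc: "pc < length p" and i: "p ! pc = decode_instr i"
  shows "represents (instr_step_code i s) (step p (pc, R))"
proof -
  have [simp]: "pfst s = pc" "assoc_lookup r (psnd s) = R r" for r
    using s by (auto simp: represents_def)
  show ?thesis
  proof (cases "even i")
    case True
    then have "step p (pc, R) = (Suc pc, R(i div 2 := Suc (R (i div 2))))"
      using pc i by (simp add: step_def decode_instr_def)
    then show ?thesis
      using True by (simp add: represents_def instr_step_code_def Let_def)
  next
    case False
    then have decode: "decode_instr i = DEC (pfst (i div 2)) (psnd (i div 2))"
      by (simp add: decode_instr_def split: prod.split)
    show ?thesis
    proof (cases "R (pfst (i div 2)) = 0")
      case True
      then have "step p (pc, R) = (psnd (i div 2), R)"
        using pc i decode by (simp add: step_def)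
      then show ?thesis
        using False True by (simp add: represents_def instr_step_code_def Let_def)
    next
      case nonzero: False
      then have "step p (pc, R) = (Suc pc, R(pfst (i div 2) := R (pfst (i div 2)) - 1))"
        using pc i decode by (simp add: step_def)
      then show ?thesis
        using False nonzero by (simp add: represents_def instr_step_code_def Let_def)
    qed
  qed
qed

lemma represents_step_code:
  assumes s: "represents s c"
  shows "represents (step_code g s) (step (decode_prog g) c)"
proof -
  obtain pc R where c: "c = (pc, R)"
    by fastforce
  let ?d = "code_drop pc g"
  have pc: "pfst s = pc"
    using s c by (simp add: represents_def)
  have len: "length (decode_prog g) = length (list_decode g)"
    by (simp add: decode_prog_def)
  show ?thesis
  proof (cases "?d = 0")
    case True
    then have "step (decode_prog g) c = c"
      using code_drop_list_decode[of pc g] len c by (simp add: step_beyond)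
    then show ?thesis
      using True s pc by (simp add: step_code_def)
  next
    case False
    then have "pc < length (decode_prog g)"
      and "decode_prog g ! pc = decode_instr (code_hd ?d)"
      using code_drop_list_decode[of pc g] len by (simp_all add: decode_prog_def)
    then show ?thesis
      using represents_instr_step_code[of s pc R] s c pc False by (simp add: step_code_def)
  qed
qed

lemma represents_run_code: "represents (run_code g x t) (run g x t)"
proof (induction t)
  case 0
  show ?case
    by (simp add: run_code_def run_def represents_def)
next
  case (Suc t)
  then show ?case
    using represents_step_code by (simp add: run_code_def run_def)
qed

lemma halted_iff_run_code: "halted g (run g x t) \<longleftrightarrow> code_drop (pfst (run_code g x t)) g = 0"
  using represents_run_code[of g x t] code_drop_list_decode[of "fst (run g x t)" g]
  by (auto simp: represents_def halted_def decode_prog_def)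

lemma output_eq_run_code: "snd (run g x t) 0 = assoc_lookup 0 (psnd (run_code g x t))"
  using represents_run_code[of g x t] by (simp add: represents_def)

lemma while_computable_run_code:
  assumes "while_computable a" "while_computable b" "while_computable c"
  shows "while_computable (\<lambda>x. run_code (a x) (b x) (c x))"
proof -
  have "while_computable (\<lambda>q. instr_step_code (code_hd (code_drop (pfst (psnd q)) (pfst q))) (psnd q))"
    unfolding instr_step_code_def Let_def assoc_cons_def
    by (intro while_computable_if while_decidable_eq while_decidable_even while_computable_div2
        while_computable_assoc_lookup while_computable_code_drop while_computable_code_hd while_computable_intros)
  then have "while_computable (\<lambda>q. step_code (pfst q) (psnd q))"
    unfolding step_code_def Let_def
    by (intro while_computable_if while_decidable_eq while_computable_code_drop while_computable_intros)
  then show ?thesis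
    using while_computable_funpow[where H = step_code, OF _ assms(1,3)] assms(2)
    unfolding run_code_def assoc_cons_def by (simp add: while_computable_intros)
qed

lemma while_decidable_halted:
  assumes "while_computable a" "while_computable b" "while_computable c"
  shows "while_decidable (\<lambda>x. halted (a x) (run (a x) (b x) (c x)))"
  using while_decidable_eq[OF while_computable_code_drop[OF while_computable_pfst[OF
        while_computable_run_code[OF assms]] assms(1)] while_computable_const[of 0]]
  by (simp add: halted_iff_run_code)

lemma while_computable_output:
  assumes "while_computable a" "while_computable b" "while_computable c"
  shows "while_computable (\<lambda>x. snd (run (a x) (b x) (c x)) 0)"
  using while_computable_assoc_lookup[OF while_computable_const[of 0] while_computable_psnd[OF
        while_computable_run_code[OF assms]]]
  by (simp add: output_eq_run_code)

lemma while_computable_Least: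
  assumes P: "while_decidable (\<lambda>q. P (pfst q) (psnd q))" and ex: "\<And>x. \<exists>n. P x n"
  shows "while_computable (\<lambda>x. LEAST n. P x n)"
proof -
  define t where "t q = (if \<exists>m<Suc (psnd q). P (pfst q) m then 0 else (1::nat))" for q
  define h where "h q = prod_encode (pfst q, Suc (psnd q))" for q
  have t_eq: "t (prod_encode (x, k)) = 0 \<longleftrightarrow> (\<exists>m\<le>k. P x m)" for x k
    by (simp add: t_def less_Suc_eq_le)
  have h_funpow: "(h ^^ n) q = prod_encode (pfst q, psnd q + n)" for n q
    by (induction n) (auto simp: h_def)
  have "while_decidable (\<lambda>q. P (pfst (psnd q)) (pfst q))"
    by (rule while_decidable_binary[OF P]) (intro while_computable_intros)+
  then have "while_decidable (\<lambda>q. \<exists>m<Suc (psnd q). P (pfst q) m)"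
    by (intro while_decidable_bounded_ex while_computable_intros)
  then have t_computable: "while_computable t"
    unfolding t_def by (intro while_computable_if while_computable_intros)
  have h_computable: "while_computable h"
    unfolding h_def by (intro while_computable_intros)
  have terminates: "\<exists>n. t ((h ^^ n) q) = 0" for q
  proof -
    obtain n where "P (pfst q) n"
      using ex by blast
    then have "t ((h ^^ n) q) = 0"
      unfolding h_funpow t_eq using le_add2 by blast
    then show ?thesis ..
  qed
  have "while_computable (\<lambda>x. psnd (iterate_until t h (prod_encode (x, 0))))"
    by (intro while_computable_psnd while_computable_comp[OF while_computable_iterate_until[OF
          t_computable h_computable terminates]] while_computable_intros)
  moreover have "(LEAST n. t ((h ^^ n) (prod_encode (x, 0))) = 0) = (LEAST n. P x n)" for x
  proof (rule Least_equality)
    show "t ((h ^^ (LEAST n. P x n)) (prod_encode (x, 0))) = 0"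
      unfolding h_funpow using LeastI_ex[OF ex[of x]] by (auto simp: t_eq)
    show "(LEAST n. P x n) \<le> n" if "t ((h ^^ n) (prod_encode (x, 0))) = 0" for n
      using that unfolding h_funpow by (auto simp: t_eq intro: Least_le le_trans)
  qed
  ultimately show ?thesis
    unfolding iterate_until_def by (simp add: h_funpow)
qed

lemma computable_imp_while_computable:
  assumes "computable f"
  shows "while_computable f"
proof -
  obtain g where g: "\<And>x. phi g x = Some (f x)"
    using assms unfolding computable_def by blast
  have halts: "\<exists>n. halted g (run g x n)" for x
    using g[of x] unfolding phi_def by (auto split: if_splits)
  have f_eq: "snd (run g x (LEAST n. halted g (run g x n))) 0 = f x" for x
    using g[of x] halts[of x] unfolding phi_def by simp
  have "while_computable (\<lambda>x. LEAST n. halted g (run g x n))"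
    using halts by (intro while_computable_Least while_decidable_halted while_computable_intros)
  then have "while_computable (\<lambda>x. snd (run g x (LEAST n. halted g (run g x n))) 0)"
    by (intro while_computable_output while_computable_intros)
  then show ?thesis
    by (rule while_computable_cong) (rule f_eq)
qed

lemma decidable_iff_while_decidable: "decidable A \<longleftrightarrow> while_decidable (\<lambda>x. x \<in> A)"
  unfolding decidable_def while_decidable_def
  using computable_imp_while_computable while_computable_imp_computable by blast

section \<open>The arithmetical form of equivalence of programs\<close>

definition simulates_within :: "nat \<Rightarrow> nat \<Rightarrow> nat \<Rightarrow> nat \<Rightarrow> nat \<Rightarrow> bool" where
  "simulates_within g h w t s \<longleftrightarrow>
     (halted g (run g w t) \<longrightarrow> halted h (run h w s) \<and> snd (run h w s) 0 = snd (run g w t) 0)"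

lemma simulates_within_mono: "simulates_within g h w t s \<Longrightarrow> s \<le> s' \<Longrightarrow> simulates_within g h w t s'"
  unfolding simulates_within_def using run_halted_stable[of h w s s'] by auto

lemma map_le_phi_iff: "phi g \<subseteq>\<^sub>m phi h \<longleftrightarrow> (\<forall>w t. \<exists>s. simulates_within g h w t s)"
proof
  assume le: "phi g \<subseteq>\<^sub>m phi h"
  show "\<forall>w t. \<exists>s. simulates_within g h w t s"
  proof (intro allI)
    fix w t
    show "\<exists>s. simulates_within g h w t s"
    proof (cases "halted g (run g w t)")
      case True
      then have "phi g w = Some (snd (run g w t) 0)"
        by (auto simp: phi_eq_Some_iff)
      then have "phi h w = Some (snd (run g w t) 0)"
        using le by (metis domI map_le_def)
      then show ?thesis
        by (auto simp: phi_eq_Some_iff simulates_within_def)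
    qed (simp add: simulates_within_def)
  qed
next
  assume sim: "\<forall>w t. \<exists>s. simulates_within g h w t s"
  show "phi g \<subseteq>\<^sub>m phi h"
    unfolding map_le_def
  proof
    fix w
    assume "w \<in> dom (phi g)"
    then obtain t where "halted g (run g w t)"
      by (auto simp: phi_eq_Some_iff)
    moreover obtain s where "simulates_within g h w t s"
      using sim by blast
    ultimately have "phi g w = Some (snd (run g w t) 0)" "phi h w = Some (snd (run g w t) 0)"
      unfolding simulates_within_def phi_eq_Some_iff by auto
    then show "phi g w = phi h w"
      by simp
  qed
qed

text \<open>Here \<open>y\<close> codes an input together with a time bound.\<close>

definition agree_within :: "nat \<Rightarrow> nat \<Rightarrow> nat \<Rightarrow> nat \<Rightarrow> bool" where
  "agree_within g h y s \<longleftrightarrow>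
     simulates_within g h (pfst y) (psnd y) s \<and> simulates_within h g (pfst y) (psnd y) s"

lemma agree_within_mono: "agree_within g h y s \<Longrightarrow> s \<le> s' \<Longrightarrow> agree_within g h y s'"
  unfolding agree_within_def using simulates_within_mono by blast

lemma phi_eq_iff_agree_within: "phi g = phi h \<longleftrightarrow> (\<forall>y. \<exists>s. agree_within g h y s)"
proof -
  have "phi g = phi h \<longleftrightarrow> phi g \<subseteq>\<^sub>m phi h \<and> phi h \<subseteq>\<^sub>m phi g"
    by (auto intro: map_le_antisym)
  also have "\<dots> \<longleftrightarrow> (\<forall>y. (\<exists>s. simulates_within g h (pfst y) (psnd y) s) \<and>
                          (\<exists>s. simulates_within h g (pfst y) (psnd y) s))"
    unfolding map_le_phi_iff by (metis prod_encode_inverse fst_conv snd_conv)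
  also have "\<dots> \<longleftrightarrow> (\<forall>y. \<exists>s. agree_within g h y s)"
    unfolding agree_within_def by (meson max.cobounded1 max.cobounded2 simulates_within_mono)
  finally show ?thesis .
qed

lemma while_decidable_agree_within:
  assumes "while_computable a" "while_computable b" "while_computable c" "while_computable d"
  shows "while_decidable (\<lambda>x. agree_within (a x) (b x) (c x) (d x))"
  unfolding agree_within_def simulates_within_def
  by (intro while_decidable_conj while_decidable_imp while_decidable_halted while_decidable_eq
      while_computable_output while_computable_intros assms)

section \<open>Bounded search for an equivalent program\<close>

lemma ex_uniform_bound:
  fixes Q :: "nat \<Rightarrow> nat \<Rightarrow> bool"
  assumes mono: "\<And>y s s'. Q y s \<Longrightarrow> s \<le> s' \<Longrightarrow> Q y s'" and ex: "\<forall>y'\<le>y. \<exists>s. Q y' s"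
  shows "\<exists>z. \<forall>y'\<le>y. Q y' z"
proof -
  obtain S where S: "\<forall>y'\<le>y. Q y' (S y')"
    using ex by metis
  have "Q y' (\<Sum>i\<le>y. S i)" if "y' \<le> y" for y'
    using S that by (auto intro: mono member_le_sum)
  then show ?thesis
    by blast
qed

text \<open>From right to left: every candidate \<open>g\<close> that fails at some \<open>y\<^sub>g\<close> is ruled out by taking
  \<open>y\<close> above all the \<open>y\<^sub>g\<close>.\<close>

lemma ex_bounded_all_ex_iff:
  fixes Q :: "nat \<Rightarrow> nat \<Rightarrow> nat \<Rightarrow> bool"
  assumes mono: "\<And>g y s s'. Q g y s \<Longrightarrow> s \<le> s' \<Longrightarrow> Q g y s'"
  shows "(\<exists>g<N. A g \<and> (\<forall>y. \<exists>s. Q g y s)) \<longleftrightarrow> (\<forall>y. \<exists>z. \<exists>g<N. A g \<and> (\<forall>y'\<le>y. Q g y' z))"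
proof
  assume "\<exists>g<N. A g \<and> (\<forall>y. \<exists>s. Q g y s)"
  then show "\<forall>y. \<exists>z. \<exists>g<N. A g \<and> (\<forall>y'\<le>y. Q g y' z)"
    using ex_uniform_bound[where Q = "Q _"] mono by meson
next
  assume all: "\<forall>y. \<exists>z. \<exists>g<N. A g \<and> (\<forall>y'\<le>y. Q g y' z)"
  show "\<exists>g<N. A g \<and> (\<forall>y. \<exists>s. Q g y s)"
  proof (rule ccontr)
    assume "\<not> (\<exists>g<N. A g \<and> (\<forall>y. \<exists>s. Q g y s))"
    then obtain bad where bad: "\<And>g s. g < N \<Longrightarrow> A g \<Longrightarrow> \<not> Q g (bad g) s"
      by metis
    obtain z g where g: "g < N" "A g" "\<forall>y'\<le>(\<Sum>i<N. bad i). Q g y' z"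
      using all by blast
    have "bad g \<le> (\<Sum>i<N. bad i)"
      using g(1) by (intro member_le_sum) auto
    then show False
      using g bad by blast
  qed
qed

lemma Pi02_if_while_decidable:
  assumes "while_decidable (\<lambda>q. Q (pfst q) (pfst (psnd q)) (psnd (psnd q)))"
    and "\<And>x. x \<in> A \<longleftrightarrow> (\<forall>y. \<exists>z. Q x y z)"
  shows "Pi02 A"
proof -
  let ?R = "{q. Q (pfst q) (pfst (psnd q)) (psnd (psnd q))}"
  have "decidable ?R"
    using assms(1) by (simp add: decidable_iff_while_decidable)
  moreover have "x \<in> A \<longleftrightarrow> (\<forall>y. \<exists>z. prod_encode (x, prod_encode (y, z)) \<in> ?R)" for x
    using assms(2) by simp
  ultimately show ?thesis
    unfolding Pi02_def by blast
qed

lemma Pi02_bounded_search_equivalent: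
  assumes "decidable L" "while_computable N"
  shows "Pi02 {x. \<exists>g<N x. g \<in> L \<and> phi g = phi x}"
proof -
  define Q where "Q x y z \<longleftrightarrow> (\<exists>g<N x. g \<in> L \<and> (\<forall>y'<Suc y. agree_within g x y' z))" for x y z
  have agree: "while_decidable (\<lambda>q. \<forall>y'<Suc (pfst (psnd (psnd q))).
      agree_within (pfst q) (pfst (psnd q)) y' (psnd (psnd (psnd q))))"
    by (rule while_decidable_bounded_all[where P = "\<lambda>j q. agree_within (pfst q) (pfst (psnd q)) j (psnd (psnd (psnd q)))"
          and n = "\<lambda>q. Suc (pfst (psnd (psnd q)))"])
      (intro while_decidable_agree_within while_computable_intros)+
  have member: "while_decidable (\<lambda>q. pfst q \<in> L)"
    using assms(1) unfolding decidable_iff_while_decidable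
    by (rule while_decidable_comp) (intro while_computable_intros)
  have "while_decidable (\<lambda>q. Q (pfst q) (pfst (psnd q)) (psnd (psnd q)))"
    unfolding Q_def
    by (rule while_decidable_bounded_ex[where P = "\<lambda>g q. g \<in> L \<and> (\<forall>y'<Suc (pfst (psnd q)). agree_within g (pfst q) y' (psnd (psnd q)))"
          and n = "\<lambda>q. N (pfst q)"])
      (simp_all add: while_decidable_conj[OF member agree] while_computable_comp[OF assms(2)]
        while_computable_intros)
  moreover have "x \<in> {x. \<exists>g<N x. g \<in> L \<and> phi g = phi x} \<longleftrightarrow> (\<forall>y. \<exists>z. Q x y z)" for x
    unfolding Q_def mem_Collect_eq phi_eq_iff_agree_within less_Suc_eq_le
    by (rule ex_bounded_all_ex_iff) (rule agree_within_mono)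
  ultimately show ?thesis
    by (rule Pi02_if_while_decidable)
qed

lemma less_power2_plen: "n < 2 ^ plen n"
proof (induction n rule: plen.induct)
  case (1 n)
  then show ?case
    by (cases "n < 2") auto
qed

lemma captured_eq_bounded_search:
  assumes succinct: "\<And>g. (\<exists>g'\<in>L. phi g' = phi g) \<Longrightarrow> \<exists>g'\<in>L. phi g' = phi g \<and> plen g' \<le> F (plen g)"
    and "functional_prop \<psi>" "captures L \<psi>"
  shows "\<psi> = {x. \<exists>g<2 ^ F (plen x). g \<in> L \<and> phi g = phi x}"
proof (intro set_eqI iffI)
  fix x
  assume "x \<in> \<psi>"
  then obtain g where g: "g \<in> L" "phi g = phi x" "plen g \<le> F (plen x)"
    using succinct assms(3) unfolding captures_def by blast
  have "g < 2 ^ plen g"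
    by (rule less_power2_plen)
  also have "\<dots> \<le> 2 ^ F (plen x)"
    using g(3) by (simp add: power_increasing)
  finally show "x \<in> {x. \<exists>g<2 ^ F (plen x). g \<in> L \<and> phi g = phi x}"
    using g by blast
next
  fix x
  assume "x \<in> {x. \<exists>g<2 ^ F (plen x). g \<in> L \<and> phi g = phi x}"
  then show "x \<in> \<psi>"
    using assms(2,3) unfolding captures_def functional_prop_def by blast
qed

theorem mainTheorem10:
  fixes L \<psi> :: "nat set"
  assumes "computably_succinct L"
    and "functional_prop \<psi>"
    and "captures L \<psi>"
  shows "Pi02 \<psi>"
proof -
  obtain F where "computable F"
    and succinct: "\<And>g. (\<exists>g'\<in>L. phi g' = phi g) \<Longrightarrow> \<exists>g'\<in>L. phi g' = phi g \<and> plen g' \<le> F (plen g)"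
    using assms(1) unfolding computably_succinct_def by blast
  have "decidable L"
    using assms(3) unfolding captures_def by blast
  moreover have "while_computable (\<lambda>x. 2 ^ F (plen x))"
    using computable_imp_while_computable[OF \<open>computable F\<close>] while_computable_plen
    by (intro while_computable_pow2) (rule while_computable_comp)
  ultimately have "Pi02 {x. \<exists>g<2 ^ F (plen x). g \<in> L \<and> phi g = phi x}"
    by (rule Pi02_bounded_search_equivalent)
  then show ?thesis
    using captured_eq_bounded_search[OF succinct assms(2,3)] by simp
qed

end
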